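(* Let $G$ be an arc-transitive group of automorphisms of a connected symmetric graph $X=X_0$, and let $X_2\xrightarrow{\wp_2}X_1\xrightarrow{\wp_1}X_0$ be a $G$-admissible chain of two consecutive $2$-covers, with lifted groups $G=G_0$, $G_1$, $G_2$. If $\wp_2$ is split-transitive (respectively, split-sectional) relative to $G_1$, then there exists a $G$-admissible chain $X_2\xrightarrow{\wp_2'}X_1'\xrightarrow{\wp_1'}X_0$ of two consecutive $2$-covers such that $\wp_1'$ is split-transitive (respectively, split-sectional) relative to $G$.
   Context: Graphs are finite, simple and connected; maps are composed on the right. A regular covering projection $\wp\colon\tilde Y\to Y$ is a surjective graph homomorphism, locally bijective on neighbourhoods, whose group $\mathrm{CT}(\wp)$ of covering transformations (automorphisms $c$ with $c\wp=\wp$) acts regularly on fibres; a $2$-cover has $\mathrm{CT}(\wp)\cong\mathbb{Z}_2$. A lift of $g\in\mathrm{Aut}\,Y$ is $\tilde g$ with $\wp g=\tilde g\wp$; if all elements of $K\leq\mathrm{Aut}\,Y$ lift, the lifted group $\tilde K$ is the group of all lifts. $\wp$ is $K$-split if $\mathrm{CT}(\wp)$ has a complement in $\tilde K$. A section is a vertex set meeting each fibre in exactly one vertex; a complement is sectional if it leaves some section invariant and transitive if it is transitive on $V(\tilde Y)$. For $K$ vertex-transitive, $\wp$ is split-sectional (resp. split-transitive) relative to $K$ if it is $K$-split and all complements of $\mathrm{CT}(\wp)$ in $\tilde K$ are sectional (resp. transitive). A chain $X_n\xrightarrow{\wp_n}\cdots\xrightarrow{\wp_1}X_0$ of consecutive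 $2$-covers is $G$-admissible if there are $G=G_0,G_1,\dots,G_n$ with $G_j\leq\mathrm{Aut}\,X_j$ the lift of $G_{j-1}$ along $\wp_j$. *)

theory Defs
  imports Main
begin

definition graph :: "'a set \<Rightarrow> ('a \<Rightarrow> 'a \<Rightarrow> bool) \<Rightarrow> bool" where
  "graph V E \<longleftrightarrow> finite V \<and> V \<noteq> {} \<and>
     (\<forall>x y. E x y \<longrightarrow> x \<in> V \<and> y \<in> V) \<and>
     (\<forall>x y. E x y \<longrightarrow> E y x) \<and> (\<forall>x. \<not> E x x) \<and>
     (\<forall>x\<in>V. \<forall>y\<in>V. E\<^sup>*\<^sup>* x y)"

definition Aut :: "'a set \<Rightarrow> ('a \<Rightarrow> 'a \<Rightarrow> bool) \<Rightarrow> ('a \<Rightarrow> 'a) set" where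
  "Aut V E = {f. bij_betw f V V \<and> (\<forall>x\<in>V. \<forall>y\<in>V. E (f x) (f y) \<longleftrightarrow> E x y)
                 \<and> (\<forall>x. x \<notin> V \<longrightarrow> f x = x)}"

definition aut_group :: "'a set \<Rightarrow> ('a \<Rightarrow> 'a \<Rightarrow> bool) \<Rightarrow> ('a \<Rightarrow> 'a) set \<Rightarrow> bool" where
  "aut_group V E K \<longleftrightarrow> K \<subseteq> Aut V E \<and> id \<in> K \<and>
     (\<forall>f\<in>K. \<forall>g\<in>K. f \<circ> g \<in> K) \<and> (\<forall>f\<in>K. inv f \<in> K)"

definition arc_transitive :: "'a set \<Rightarrow> ('a \<Rightarrow> 'a \<Rightarrow> bool) \<Rightarrow> ('a \<Rightarrow> 'a) set \<Rightarrow> bool" where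
  "arc_transitive V E G \<longleftrightarrow> aut_group V E G \<and>
     (\<forall>u v x y. E u v \<longrightarrow> E x y \<longrightarrow> (\<exists>g\<in>G. g u = x \<and> g v = y))"

definition covering :: "'b set \<Rightarrow> ('b \<Rightarrow> 'b \<Rightarrow> bool) \<Rightarrow> 'a set \<Rightarrow> ('a \<Rightarrow> 'a \<Rightarrow> bool)
    \<Rightarrow> ('b \<Rightarrow> 'a) \<Rightarrow> bool" where
  "covering V' E' V E p \<longleftrightarrow> graph V' E' \<and> graph V E \<and> p ` V' = V \<and>
     (\<forall>x y. E' x y \<longrightarrow> E (p x) (p y)) \<and>
     (\<forall>x\<in>V'. bij_betw p {y. E' x y} {z. E (p x) z})"

definition CT :: "'b set \<Rightarrow> ('b \<Rightarrow> 'b \<Rightarrow> bool) \<Rightarrow> ('b \<Rightarrow> 'a) \<Rightarrow> ('b \<Rightarrow> 'b) set" where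
  "CT V' E' p = {c \<in> Aut V' E'. \<forall>x\<in>V'. p (c x) = p x}"

definition regular_covering :: "'b set \<Rightarrow> ('b \<Rightarrow> 'b \<Rightarrow> bool) \<Rightarrow> 'a set \<Rightarrow> ('a \<Rightarrow> 'a \<Rightarrow> bool)
    \<Rightarrow> ('b \<Rightarrow> 'a) \<Rightarrow> bool" where
  "regular_covering V' E' V E p \<longleftrightarrow> covering V' E' V E p \<and>
     (\<forall>x1\<in>V'. \<forall>x2\<in>V'. p x1 = p x2 \<longrightarrow> (\<exists>!c. c \<in> CT V' E' p \<and> c x1 = x2))"

definition two_cover :: "'b set \<Rightarrow> ('b \<Rightarrow> 'b \<Rightarrow> bool) \<Rightarrow> 'a set \<Rightarrow> ('a \<Rightarrow> 'a \<Rightarrow> bool)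
    \<Rightarrow> ('b \<Rightarrow> 'a) \<Rightarrow> bool" where
  "two_cover V' E' V E p \<longleftrightarrow> regular_covering V' E' V E p \<and> card (CT V' E' p) = 2"

text \<open>h is a lift of g (maps composed on the right: p g = h p).\<close>
definition is_lift :: "'b set \<Rightarrow> ('b \<Rightarrow> 'a) \<Rightarrow> ('a \<Rightarrow> 'a) \<Rightarrow> ('b \<Rightarrow> 'b) \<Rightarrow> bool" where
  "is_lift V' p g h \<longleftrightarrow> (\<forall>x\<in>V'. g (p x) = p (h x))"

definition all_lift :: "'b set \<Rightarrow> ('b \<Rightarrow> 'b \<Rightarrow> bool) \<Rightarrow> ('b \<Rightarrow> 'a) \<Rightarrow> ('a \<Rightarrow> 'a) set \<Rightarrow> bool" where
  "all_lift V' E' p K \<longleftrightarrow> (\<forall>g\<in>K. \<exists>h\<in>Aut V' E'. is_lift V' p g h)"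

definition lifted_group :: "'b set \<Rightarrow> ('b \<Rightarrow> 'b \<Rightarrow> bool) \<Rightarrow> ('b \<Rightarrow> 'a) \<Rightarrow> ('a \<Rightarrow> 'a) set
    \<Rightarrow> ('b \<Rightarrow> 'b) set" where
  "lifted_group V' E' p K = {h \<in> Aut V' E'. \<exists>g\<in>K. is_lift V' p g h}"

definition complement :: "'b set \<Rightarrow> ('b \<Rightarrow> 'b \<Rightarrow> bool) \<Rightarrow> ('b \<Rightarrow> 'a) \<Rightarrow> ('a \<Rightarrow> 'a) set
    \<Rightarrow> ('b \<Rightarrow> 'b) set \<Rightarrow> bool" where
  "complement V' E' p K H \<longleftrightarrow> aut_group V' E' H \<and> H \<subseteq> lifted_group V' E' p K \<and>
     H \<inter> CT V' E' p = {id} \<and>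
     {h \<circ> c | h c. h \<in> H \<and> c \<in> CT V' E' p} = lifted_group V' E' p K"

definition split :: "'b set \<Rightarrow> ('b \<Rightarrow> 'b \<Rightarrow> bool) \<Rightarrow> ('b \<Rightarrow> 'a) \<Rightarrow> ('a \<Rightarrow> 'a) set \<Rightarrow> bool" where
  "split V' E' p K \<longleftrightarrow> (\<exists>H. complement V' E' p K H)"

definition is_section :: "'b set \<Rightarrow> 'a set \<Rightarrow> ('b \<Rightarrow> 'a) \<Rightarrow> 'b set \<Rightarrow> bool" where
  "is_section V' V p S \<longleftrightarrow> S \<subseteq> V' \<and> (\<forall>y\<in>V. card (S \<inter> {x\<in>V'. p x = y}) = 1)"

definition sectional :: "'b set \<Rightarrow> 'a set \<Rightarrow> ('b \<Rightarrow> 'a) \<Rightarrow> ('b \<Rightarrow> 'b) set \<Rightarrow> bool" where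
  "sectional V' V p H \<longleftrightarrow> (\<exists>S. is_section V' V p S \<and> (\<forall>h\<in>H. h ` S = S))"

definition transitive_on :: "'b set \<Rightarrow> ('b \<Rightarrow> 'b) set \<Rightarrow> bool" where
  "transitive_on V' H \<longleftrightarrow> (\<forall>x\<in>V'. \<forall>y\<in>V'. \<exists>h\<in>H. h x = y)"

definition split_sectional :: "'b set \<Rightarrow> ('b \<Rightarrow> 'b \<Rightarrow> bool) \<Rightarrow> 'a set \<Rightarrow> ('b \<Rightarrow> 'a)
    \<Rightarrow> ('a \<Rightarrow> 'a) set \<Rightarrow> bool" where
  "split_sectional V' E' V p K \<longleftrightarrow> split V' E' p K \<and>
     (\<forall>H. complement V' E' p K H \<longrightarrow> sectional V' V p H)"

definition split_transitive :: "'b set \<Rightarrow> ('b \<Rightarrow> 'b \<Rightarrow> bool) \<Rightarrow> ('b \<Rightarrow> 'a)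
    \<Rightarrow> ('a \<Rightarrow> 'a) set \<Rightarrow> bool" where
  "split_transitive V' E' p K \<longleftrightarrow> split V' E' p K \<and>
     (\<forall>H. complement V' E' p K H \<longrightarrow> transitive_on V' H)"

definition admissible2 ::
  "'c set \<Rightarrow> ('c \<Rightarrow> 'c \<Rightarrow> bool) \<Rightarrow> ('c \<Rightarrow> 'b) \<Rightarrow>
   'b set \<Rightarrow> ('b \<Rightarrow> 'b \<Rightarrow> bool) \<Rightarrow> ('b \<Rightarrow> 'a) \<Rightarrow>
   'a set \<Rightarrow> ('a \<Rightarrow> 'a \<Rightarrow> bool) \<Rightarrow>
   ('a \<Rightarrow> 'a) set \<Rightarrow> ('b \<Rightarrow> 'b) set \<Rightarrow> ('c \<Rightarrow> 'c) set \<Rightarrow> bool" where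
  "admissible2 V2 E2 p2 V1 E1 p1 V0 E0 G G1 G2 \<longleftrightarrow>
     two_cover V1 E1 V0 E0 p1 \<and> two_cover V2 E2 V1 E1 p2 \<and>
     aut_group V0 E0 G \<and>
     all_lift V1 E1 p1 G \<and> G1 = lifted_group V1 E1 p1 G \<and>
     all_lift V2 E2 p2 G1 \<and> G2 = lifted_group V2 E2 p2 G1"

end

theory Submission
  imports Defs "HOL-Combinatorics.Permutations"
begin

text \<open>
  Let \<open>c\<^sub>1\<close>, \<open>c\<^sub>2\<close> be the nontrivial covering transformations of \<open>\<wp>\<^sub>1\<close>, \<open>\<wp>\<^sub>2\<close>
  and let \<open>H\<close> be a complement of \<open>CT(\<wp>\<^sub>2) = {1, c\<^sub>2}\<close> in \<open>G\<^sub>2\<close>.  Some \<open>a \<in> H\<close>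
  lifts \<open>c\<^sub>1\<close>; it is a fixed-point-free involution, and it is central in \<open>G\<^sub>2\<close>,
  because a covering transformation of a 2-cover commutes with every lift and
  \<open>H \<inter> CT(\<wp>\<^sub>2)\<close> is trivial.  The quotient \<open>X\<^sub>1' = X\<^sub>2/\<langle>a\<rangle>\<close> gives a new chain
  \<open>X\<^sub>2 \<rightarrow> X\<^sub>1' \<rightarrow> X\<^sub>0\<close> of 2-covers: every element of \<open>G\<^sub>2\<close> descends to \<open>X\<^sub>1'\<close>, the lift
  of \<open>G\<close> to \<open>X\<^sub>1'\<close> is the image of \<open>G\<^sub>2\<close>, and \<open>CT(\<wp>\<^sub>1')\<close> is the image of \<open>CT(\<wp>\<^sub>2)\<close>.
  The image of \<open>H\<close> is a complement, so \<open>\<wp>\<^sub>1'\<close> splits.  Conversely, the preimage in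
  \<open>G\<^sub>2\<close> of any complement \<open>K\<close> of \<open>CT(\<wp>\<^sub>1')\<close> is a complement of \<open>CT(\<wp>\<^sub>2)\<close> containing
  \<open>a\<close>.  Transitivity of the preimage descends to \<open>K\<close>, and an invariant section of \<open>\<wp>\<^sub>2\<close>,
  being \<open>a\<close>-invariant, maps onto an invariant section of \<open>\<wp>\<^sub>1'\<close>.
\<close>

section \<open>Automorphisms and coverings\<close>

lemma Aut_permutes: "f \<in> Aut V E \<Longrightarrow> f permutes V"
  unfolding Aut_def by (auto intro: bij_imp_permutes)

lemma AutI:
  assumes "f permutes V" and "\<And>x y. x \<in> V \<Longrightarrow> y \<in> V \<Longrightarrow> E (f x) (f y) \<longleftrightarrow> E x y"
  shows "f \<in> Aut V E"
  using assms by (auto simp: Aut_def permutes_imp_bij permutes_not_in)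

lemma Aut_in_V: "f \<in> Aut V E \<Longrightarrow> x \<in> V \<Longrightarrow> f x \<in> V"
  by (simp add: Aut_permutes permutes_in_image)

lemma Aut_inj: "f \<in> Aut V E \<Longrightarrow> f x = f y \<Longrightarrow> x = y"
  by (metis Aut_permutes injD permutes_inj)

lemma Aut_inverses:
  assumes "f \<in> Aut V E"
  shows "f (inv f x) = x" and "inv f (f x) = x"
  using permutes_inverses[OF Aut_permutes[OF assms]] by auto

lemma Aut_edge_iff:
  assumes "graph V E" and "f \<in> Aut V E"
  shows "E (f x) (f y) \<longleftrightarrow> E x y"
proof (cases "x \<in> V \<and> y \<in> V")
  case True
  then show ?thesis using assms(2) by (simp add: Aut_def)
next
  case False
  then have "f x \<notin> V \<or> f y \<notin> V"
    using permutes_in_image[OF Aut_permutes[OF assms(2)]] by blast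
  then show ?thesis using False assms(1) by (auto simp: graph_def)
qed

lemma id_in_Aut: "id \<in> Aut V E"
  by (rule AutI) simp_all

lemma Aut_comp:
  assumes f: "f \<in> Aut V E" and g: "g \<in> Aut V E"
  shows "f \<circ> g \<in> Aut V E"
proof (rule AutI)
  show "f \<circ> g permutes V" using Aut_permutes[OF g] Aut_permutes[OF f] by (rule permutes_compose)
  show "E ((f \<circ> g) x) ((f \<circ> g) y) \<longleftrightarrow> E x y" if "x \<in> V" "y \<in> V" for x y
    using that f g Aut_in_V[OF g] by (simp add: Aut_def)
qed

lemma inv_in_Aut:
  assumes f: "f \<in> Aut V E"
  shows "inv f \<in> Aut V E"
proof (rule AutI)
  show "inv f permutes V" using Aut_permutes[OF f] by (rule permutes_inv)
  show "E (inv f x) (inv f y) \<longleftrightarrow> E x y" if "x \<in> V" "y \<in> V" for x y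
  proof -
    have "inv f x \<in> V" "inv f y \<in> V"
      using that permutes_in_image[OF permutes_inv[OF Aut_permutes[OF f]]] by auto
    then have "E (f (inv f x)) (f (inv f y)) \<longleftrightarrow> E (inv f x) (inv f y)"
      using f by (simp add: Aut_def)
    then show ?thesis by (simp add: Aut_inverses[OF f])
  qed
qed

lemma covering_locally_inj:
  assumes "covering V' E' V E p" and "E' x y" and "E' x z" and "p y = p z"
  shows "y = z"
  using assms unfolding covering_def graph_def bij_betw_def inj_on_def by blast

lemma covering_Aut_eqI:
  assumes cov: "covering V' E' V E p" and f1: "f1 \<in> Aut V' E'" and f2: "f2 \<in> Aut V' E'"
    and same_proj: "\<And>x. x \<in> V' \<Longrightarrow> p (f1 x) = p (f2 x)"
    and x0: "x0 \<in> V'" and agree: "f1 x0 = f2 x0"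
  shows "f1 = f2"
proof
  fix y
  have gr: "graph V' E'" using cov by (simp add: covering_def)
  show "f1 y = f2 y"
  proof (cases "y \<in> V'")
    case True
    then have "E'\<^sup>*\<^sup>* x0 y" using gr x0 by (simp add: graph_def)
    then show ?thesis
    proof (induction rule: rtranclp_induct)
      case base
      show ?case by (fact agree)
    next
      case (step y z)
      have "E' (f1 y) (f1 z)" and "E' (f1 y) (f2 z)"
        using step Aut_edge_iff[OF gr f1] Aut_edge_iff[OF gr f2] by metis+
      moreover have "z \<in> V'" using gr step.hyps(2) by (simp add: graph_def)
      ultimately show ?case using covering_locally_inj[OF cov] same_proj by metis
    qed
  next
    case False
    then show ?thesis using f1 f2 by (simp add: Aut_def)
  qed
qed

lemma id_in_CT: "id \<in> CT V' E' p"
  by (simp add: CT_def id_in_Aut)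

lemma CT_eqI:
  assumes "covering V' E' V E p" and "c \<in> CT V' E' p" and "d \<in> CT V' E' p"
    and "x \<in> V'" and "c x = d x"
  shows "c = d"
  using assms by (intro covering_Aut_eqI[of V' E' V E p]) (auto simp: CT_def)

lemma covering_comp:
  assumes p2: "covering V2 E2 V1 E1 p2" and p1: "covering V1 E1 V0 E0 p1"
  shows "covering V2 E2 V0 E0 (p1 \<circ> p2)"
  unfolding covering_def
proof (intro conjI allI impI ballI)
  show "graph V2 E2" and "graph V0 E0" using p1 p2 by (simp_all add: covering_def)
  show "(p1 \<circ> p2) ` V2 = V0" using p1 p2 unfolding covering_def by (metis image_comp)
  show "E0 ((p1 \<circ> p2) x) ((p1 \<circ> p2) y)" if "E2 x y" for x y
    using that p1 p2 by (simp add: covering_def)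
  show "bij_betw (p1 \<circ> p2) {y. E2 x y} {z. E0 ((p1 \<circ> p2) x) z}" if x: "x \<in> V2" for x
  proof -
    have "p2 x \<in> V1" using x p2 by (auto simp: covering_def)
    then show ?thesis
      using x p1 p2 bij_betw_trans[of p2 "{y. E2 x y}" "{z. E1 (p2 x) z}" p1]
      by (simp add: covering_def)
  qed
qed

lemma covering_factor:
  assumes p: "covering V E W F p" and q: "covering V E V' E' q"
    and factor: "\<And>x. x \<in> V \<Longrightarrow> p' (q x) = p x"
  shows "covering V' E' W F p'"
  unfolding covering_def
proof (intro conjI allI impI ballI)
  have gr: "graph V E" and qV: "q ` V = V'" and pV: "p ` V = W"
    using p q by (simp_all add: covering_def)
  have nbrs: "{v. E' (q x) v} = q ` {y. E x y}" if "x \<in> V" for x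
    using q that by (simp add: covering_def bij_betw_def)
  show "graph V' E'" and "graph W F" using p q by (simp_all add: covering_def)
  show "p' ` V' = W"
    using qV pV factor by (metis image_comp image_cong comp_apply)
  show "F (p' u) (p' v)" if "E' u v" for u v
  proof -
    have "u \<in> V'" using that q by (simp add: covering_def graph_def)
    then obtain x where x: "x \<in> V" "u = q x" using qV by (metis imageE)
    have "v \<in> q ` {y. E x y}" using nbrs[OF x(1)] that x(2) by (metis mem_Collect_eq)
    then obtain y where "E x y" "v = q y" by blast
    moreover have "y \<in> V" using gr \<open>E x y\<close> by (simp add: graph_def)
    ultimately show ?thesis using x p factor by (simp add: covering_def)
  qed
  show "bij_betw p' {v. E' u v} {w. F (p' u) w}" if "u \<in> V'" for u
  proof -
    obtain x where x: "x \<in> V" "u = q x" using \<open>u \<in> V'\<close> qV by (metis imageE)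
    have bq: "bij_betw q {y. E x y} {v. E' (q x) v}" using x(1) q unfolding covering_def by blast
    have bp: "bij_betw p {y. E x y} {w. F (p x) w}" using x(1) p unfolding covering_def by blast
    have "y \<in> V" if "E x y" for y using gr that unfolding graph_def by blast
    then have "bij_betw (p' \<circ> q) {y. E x y} {w. F (p x) w} \<longleftrightarrow> bij_betw p {y. E x y} {w. F (p x) w}"
      by (intro bij_betw_cong) (simp add: factor)
    then have "bij_betw p' {v. E' (q x) v} {w. F (p x) w}"
      using bp bij_betw_comp_iff[OF bq] by blast
    then show ?thesis using x factor by simp
  qed
qed

section \<open>Lifted groups\<close>

lemma is_lift_comp:
  assumes "is_lift V' p g h" and "is_lift V' p g' h'" and "\<And>x. x \<in> V' \<Longrightarrow> h' x \<in> V'"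
  shows "is_lift V' p (g \<circ> g') (h \<circ> h')"
  using assms by (simp add: is_lift_def)

lemma is_lift_inv:
  assumes lift: "is_lift V' p g h" and h: "h \<in> Aut V' E'" and g: "g \<in> Aut V E"
  shows "is_lift V' p (inv g) (inv h)"
  unfolding is_lift_def
proof
  fix y assume "y \<in> V'"
  then have "g (p (inv h y)) = p y"
    using lift Aut_in_V[OF inv_in_Aut[OF h]] Aut_inverses(1)[OF h] by (metis is_lift_def)
  then show "inv g (p y) = p (inv h y)" using Aut_inverses(2)[OF g] by metis
qed

lemma is_lift_trans:
  assumes "is_lift V2 p2 g1 h" and "is_lift V1 p1 g g1" and "p2 ` V2 \<subseteq> V1"
  shows "is_lift V2 (p1 \<circ> p2) g h"
  using assms by (auto simp: is_lift_def)

lemma lifted_group_aut: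
  assumes K: "aut_group V E K"
  shows "aut_group V' E' (lifted_group V' E' p K)"
  unfolding aut_group_def
proof (intro conjI ballI)
  show "lifted_group V' E' p K \<subseteq> Aut V' E'" by (auto simp: lifted_group_def)
  show "id \<in> lifted_group V' E' p K"
    using K id_in_Aut by (auto simp: lifted_group_def aut_group_def is_lift_def intro!: bexI[of _ id])
next
  fix f h assume "f \<in> lifted_group V' E' p K" "h \<in> lifted_group V' E' p K"
  then obtain g k where "f \<in> Aut V' E'" "g \<in> K" "is_lift V' p g f"
    and "h \<in> Aut V' E'" "k \<in> K" "is_lift V' p k h" by (auto simp: lifted_group_def)
  moreover have "g \<circ> k \<in> K" using K \<open>g \<in> K\<close> \<open>k \<in> K\<close> by (simp add: aut_group_def)
  ultimately have "f \<circ> h \<in> Aut V' E'" "is_lift V' p (g \<circ> k) (f \<circ> h)" "g \<circ> k \<in> K"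
    using Aut_comp is_lift_comp Aut_in_V by metis+
  then show "f \<circ> h \<in> lifted_group V' E' p K" unfolding lifted_group_def by blast
next
  fix f assume "f \<in> lifted_group V' E' p K"
  then obtain g where "f \<in> Aut V' E'" "g \<in> K" "is_lift V' p g f" by (auto simp: lifted_group_def)
  moreover have "inv g \<in> K" "g \<in> Aut V E" using K \<open>g \<in> K\<close> by (auto simp: aut_group_def)
  ultimately have "inv f \<in> Aut V' E'" "is_lift V' p (inv g) (inv f)"
    using inv_in_Aut is_lift_inv by metis+
  then show "inv f \<in> lifted_group V' E' p K" unfolding lifted_group_def using \<open>inv g \<in> K\<close> by blast
qed

lemma aut_group_comp_subset:
  assumes "aut_group V E L" and "A \<subseteq> L" and "B \<subseteq> L"
  shows "{f \<circ> g |f g. f \<in> A \<and> g \<in> B} \<subseteq> L"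
proof
  fix h assume "h \<in> {f \<circ> g |f g. f \<in> A \<and> g \<in> B}"
  then obtain f g where "h = f \<circ> g" "f \<in> A" "g \<in> B" by blast
  moreover from this have "f \<in> L" "g \<in> L" using assms(2,3) by auto
  ultimately show "h \<in> L" using assms(1) by (simp add: aut_group_def)
qed

lemma complement_decompose:
  assumes "complement V' E' p K H" and "h \<in> lifted_group V' E' p K"
  obtains h' c where "h = h' \<circ> c" and "h' \<in> H" and "c \<in> CT V' E' p"
proof -
  have "h \<in> {h' \<circ> c | h' c. h' \<in> H \<and> c \<in> CT V' E' p}"
    using assms unfolding complement_def by blast
  then show ?thesis using that by blast
qed

section \<open>2-covers\<close>

lemma two_coverI:
  assumes cov: "covering V' E' V E p" and c: "c \<in> CT V' E' p" and "c \<noteq> id"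
    and fibre: "\<And>x y. x \<in> V' \<Longrightarrow> y \<in> V' \<Longrightarrow> p x = p y \<Longrightarrow> y = x \<or> y = c x"
  shows "two_cover V' E' V E p" and "CT V' E' p = {id, c}"
proof -
  obtain x0 where x0: "x0 \<in> V'" using cov by (auto simp: covering_def graph_def)
  show CT_eq: "CT V' E' p = {id, c}"
  proof
    show "CT V' E' p \<subseteq> {id, c}"
    proof
      fix d assume d: "d \<in> CT V' E' p"
      then have "d x0 \<in> V'" and "p (d x0) = p x0" using x0 by (auto simp: CT_def Aut_in_V)
      then have "d x0 = id x0 \<or> d x0 = c x0" using fibre[OF x0] by auto
      then show "d \<in> {id, c}" using CT_eqI[OF cov d _ x0] id_in_CT c by blast
    qed
    show "{id, c} \<subseteq> CT V' E' p" using c id_in_CT by blast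
  qed
  have "\<exists>!d. d \<in> CT V' E' p \<and> d x = y" if "x \<in> V'" "y \<in> V'" "p x = p y" for x y
  proof (rule ex_ex1I)
    show "\<exists>d. d \<in> CT V' E' p \<and> d x = y" using fibre[OF that] c id_in_CT[of V' E' p] by (metis id_apply)
    show "d = d'" if "d \<in> CT V' E' p \<and> d x = y" "d' \<in> CT V' E' p \<and> d' x = y" for d d'
      using that CT_eqI[OF cov _ _ \<open>x \<in> V'\<close>] by metis
  qed
  moreover have "card (CT V' E' p) = 2" using CT_eq \<open>c \<noteq> id\<close> by auto
  ultimately show "two_cover V' E' V E p"
    using cov by (simp add: two_cover_def regular_covering_def)
qed

definition deck :: "'b set \<Rightarrow> ('b \<Rightarrow> 'b \<Rightarrow> bool) \<Rightarrow> ('b \<Rightarrow> 'a) \<Rightarrow> 'b \<Rightarrow> 'b" where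
  "deck V' E' p = (SOME c. c \<in> CT V' E' p \<and> c \<noteq> id)"

lemma deck_eqI: "CT V' E' p = {id, c} \<Longrightarrow> c \<noteq> id \<Longrightarrow> deck V' E' p = c"
  unfolding deck_def by (rule some_equality) auto

lemma card_eq_twice_card_image:
  assumes "finite A" and "\<And>x. x \<in> A \<Longrightarrow> card {y \<in> A. f y = f x} = 2"
  shows "card A = 2 * card (f ` A)"
proof -
  have "card A = card (\<Union>i\<in>f ` A. {y \<in> A. f y = i})" by (rule arg_cong[where f = card]) auto
  also have "\<dots> = (\<Sum>i\<in>f ` A. card {y \<in> A. f y = i})"
    using assms(1) by (intro card_UN_disjoint) auto
  also have "\<dots> = (\<Sum>i\<in>f ` A. 2)" using assms(2) by (intro sum.cong) auto
  finally show ?thesis by simp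
qed

context
  fixes V' :: "'b set" and E' and V :: "'a set" and E and p :: "'b \<Rightarrow> 'a"
  assumes two_cover: "two_cover V' E' V E p"
begin

lemma two_cover_covering: "covering V' E' V E p"
  using two_cover by (simp add: two_cover_def regular_covering_def)

lemma two_cover_CT_eq: "CT V' E' p = {id, deck V' E' p}" and deck_neq_id: "deck V' E' p \<noteq> id"
proof -
  have "card (CT V' E' p) = 2" using two_cover by (simp add: two_cover_def)
  then obtain c d where cd: "CT V' E' p = {c, d}" "c \<noteq> d" by (auto simp: card_2_iff)
  then obtain c' where c': "CT V' E' p = {id, c'}" "c' \<noteq> id"
    using id_in_CT[of V' E' p] by (metis insertE insert_commute singletonD)
  then show "CT V' E' p = {id, deck V' E' p}" "deck V' E' p \<noteq> id" using deck_eqI[OF c'] c' by auto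
qed

lemma deck_in_CT: "deck V' E' p \<in> CT V' E' p"
  using two_cover_CT_eq by blast

lemma deck_in_Aut: "deck V' E' p \<in> Aut V' E'"
  using deck_in_CT by (simp add: CT_def)

lemma deck_proj: "x \<in> V' \<Longrightarrow> p (deck V' E' p x) = p x"
  using deck_in_CT by (simp add: CT_def)

lemma deck_no_fixpoint: "x \<in> V' \<Longrightarrow> deck V' E' p x \<noteq> x"
  using CT_eqI[OF two_cover_covering deck_in_CT id_in_CT] deck_neq_id by auto

lemma two_cover_fibre:
  assumes "x \<in> V'" "y \<in> V'" "p x = p y"
  shows "y = x \<or> y = deck V' E' p x"
proof -
  have "\<exists>!c. c \<in> CT V' E' p \<and> c x = y"
    using assms two_cover by (simp add: two_cover_def regular_covering_def)
  then obtain c where "c \<in> CT V' E' p" "c x = y" by blast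
  then show ?thesis using two_cover_CT_eq by auto
qed

lemma deck_deck [simp]: "deck V' E' p (deck V' E' p x) = x"
proof (cases "x \<in> V'")
  case True
  have "deck V' E' p x \<in> V'" using Aut_in_V[OF deck_in_Aut True] .
  then have "deck V' E' p (deck V' E' p x) \<in> V'" by (rule Aut_in_V[OF deck_in_Aut])
  then have "deck V' E' p (deck V' E' p x) = x \<or> deck V' E' p (deck V' E' p x) = deck V' E' p x"
    using two_cover_fibre[OF True] deck_proj True \<open>deck V' E' p x \<in> V'\<close> by metis
  then show ?thesis using Aut_inj[OF deck_in_Aut] deck_no_fixpoint[OF True] by metis
next
  case False
  then show ?thesis using deck_in_Aut by (simp add: Aut_def)
qed

lemma card_two_cover: "card V' = 2 * card V"
proof -
  have "finite V'" using two_cover_covering by (simp add: covering_def graph_def)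
  moreover have "card {y \<in> V'. p y = p x} = 2" if "x \<in> V'" for x
  proof -
    have "y = x \<or> y = deck V' E' p x" if "y \<in> V'" "p y = p x" for y
      using two_cover_fibre[OF \<open>x \<in> V'\<close> that(1) that(2)[symmetric]] .
    then have "{y \<in> V'. p y = p x} = {x, deck V' E' p x}"
      using that deck_proj[OF that] Aut_in_V[OF deck_in_Aut that] by auto
    then show ?thesis using deck_no_fixpoint[OF that] by auto
  qed
  ultimately have "card V' = 2 * card (p ` V')" by (rule card_eq_twice_card_image)
  then show ?thesis using two_cover_covering by (simp add: covering_def)
qed

lemma lift_unique_up_to_deck:
  assumes f: "f \<in> Aut V' E'" and f': "f' \<in> Aut V' E'"
    and lift: "is_lift V' p g f" and lift': "is_lift V' p g f'"
  shows "f' = f \<or> f' = deck V' E' p \<circ> f"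
proof -
  obtain x0 where x0: "x0 \<in> V'" using two_cover_covering by (auto simp: covering_def graph_def)
  have same_proj: "p (f' x) = p (f x)" if "x \<in> V'" for x
    using that lift lift' by (simp add: is_lift_def)
  have same_proj_deck: "p (f' x) = p ((deck V' E' p \<circ> f) x)" if "x \<in> V'" for x
    using same_proj[OF that] deck_proj Aut_in_V[OF f that] by simp
  have "f' x0 = f x0 \<or> f' x0 = deck V' E' p (f x0)"
    using two_cover_fibre[OF Aut_in_V[OF f x0] Aut_in_V[OF f' x0]] same_proj[OF x0] by simp
  then show ?thesis
  proof
    assume "f' x0 = f x0"
    then show ?thesis using covering_Aut_eqI[OF two_cover_covering f' f same_proj x0] by blast
  next
    assume "f' x0 = deck V' E' p (f x0)"
    then have "f' x0 = (deck V' E' p \<circ> f) x0" by simp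
    then show ?thesis
      using covering_Aut_eqI[OF two_cover_covering f' Aut_comp[OF deck_in_Aut f] same_proj_deck x0]
      by blast
  qed
qed

lemma deck_commute:
  assumes h: "h \<in> Aut V' E'" and lift: "is_lift V' p g h"
  shows "h \<circ> deck V' E' p = deck V' E' p \<circ> h"
proof -
  have "is_lift V' p g (h \<circ> deck V' E' p)"
    using lift deck_proj Aut_in_V[OF deck_in_Aut] unfolding is_lift_def by (metis comp_apply)
  moreover have "is_lift V' p g (deck V' E' p \<circ> h)"
    using lift deck_proj Aut_in_V[OF h] unfolding is_lift_def by (metis comp_apply)
  ultimately have "deck V' E' p \<circ> h = h \<circ> deck V' E' p \<or> deck V' E' p \<circ> h = deck V' E' p \<circ> (h \<circ> deck V' E' p)"
    using lift_unique_up_to_deck Aut_comp h deck_in_Aut by blast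
  moreover have "deck V' E' p \<circ> h \<noteq> deck V' E' p \<circ> (h \<circ> deck V' E' p)"
  proof
    assume "deck V' E' p \<circ> h = deck V' E' p \<circ> (h \<circ> deck V' E' p)"
    then have "h = h \<circ> deck V' E' p" by (metis deck_deck fun_eq_iff o_apply)
    then have "deck V' E' p = id" using Aut_inj[OF h] by (metis comp_apply eq_id_iff)
    then show False using deck_neq_id by contradiction
  qed
  ultimately show ?thesis by metis
qed

lemma deck_in_lifted_group: "id \<in> K \<Longrightarrow> deck V' E' p \<in> lifted_group V' E' p K"
  using deck_in_Aut deck_proj by (auto simp: lifted_group_def is_lift_def intro!: bexI[of _ id])

lemma deck_not_in_complement: "complement V' E' p K H \<Longrightarrow> deck V' E' p \<notin> H"
  using deck_in_CT deck_neq_id by (auto simp: complement_def)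

lemma complement_cases:
  assumes "complement V' E' p K H" and "h \<in> lifted_group V' E' p K"
  shows "h \<in> H \<or> h \<circ> deck V' E' p \<in> H"
proof -
  obtain h' c where "h = h' \<circ> c" "h' \<in> H" "c \<in> CT V' E' p"
    using assms by (rule complement_decompose)
  moreover have "h' \<circ> deck V' E' p \<circ> deck V' E' p = h'" by (simp add: fun_eq_iff)
  ultimately show ?thesis using two_cover_CT_eq by auto
qed

end

section \<open>Quotient by a fixed-point-free involutory covering transformation\<close>

lemma involution_quotient_map_exists:
  assumes "finite V" and "finite V'" and "card V = 2 * card V'"
    and a_in_V: "\<And>x. x \<in> V \<Longrightarrow> a x \<in> V" and a_no_fixpoint: "\<And>x. x \<in> V \<Longrightarrow> a x \<noteq> x"
    and a_a: "\<And>x. a (a x) = x"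
  shows "\<exists>q :: 'a \<Rightarrow> 'b. q ` V = V' \<and> (\<forall>x\<in>V. \<forall>y\<in>V. q y = q x \<longleftrightarrow> y = x \<or> y = a x)"
proof -
  define orbit where "orbit x = {x, a x}" for x
  have orbit_eq: "orbit y = orbit x \<longleftrightarrow> y = x \<or> y = a x" for x y
    unfolding orbit_def using a_a by (auto simp: doubleton_eq_iff)
  have "card {y \<in> V. orbit y = orbit x} = 2" if "x \<in> V" for x
  proof -
    have "{y \<in> V. orbit y = orbit x} = {x, a x}" using that a_in_V orbit_eq by auto
    then show ?thesis using a_no_fixpoint[OF that] by simp
  qed
  then have "card V = 2 * card (orbit ` V)" by (rule card_eq_twice_card_image[OF \<open>finite V\<close>])
  then have "card (orbit ` V) = card V'" using assms(3) by simp
  then obtain b where b: "bij_betw b (orbit ` V) V'"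
    using finite_same_card_bij \<open>finite V\<close> \<open>finite V'\<close> by blast
  then have "(b \<circ> orbit) ` V = V'" by (simp add: bij_betw_def image_comp)
  moreover have "b (orbit y) = b (orbit x) \<longleftrightarrow> y = x \<or> y = a x" if "x \<in> V" "y \<in> V" for x y
  proof -
    have "b (orbit y) = b (orbit x) \<longleftrightarrow> orbit y = orbit x"
      using inj_on_eq_iff[OF bij_betw_imp_inj_on[OF b]] that by blast
    then show ?thesis using orbit_eq by simp
  qed
  ultimately show ?thesis by (intro exI[of _ "b \<circ> orbit"]) simp
qed

text \<open>
  The quotient \<open>X/\<langle>a\<rangle>\<close> lives on an arbitrary vertex set \<open>V'\<close> of the right size,
  through a map \<open>q\<close> whose fibres are the \<open>\<langle>a\<rangle>\<close>-orbits.  \<open>descend h\<close> is the identity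
  outside \<open>V'\<close>, as members of \<open>Aut\<close> must be.
\<close>

locale involution_quotient =
  fixes V :: "'c set" and E :: "'c \<Rightarrow> 'c \<Rightarrow> bool"
    and W :: "'a set" and F :: "'a \<Rightarrow> 'a \<Rightarrow> bool" and p :: "'c \<Rightarrow> 'a"
    and a :: "'c \<Rightarrow> 'c" and V' :: "'b set" and q :: "'c \<Rightarrow> 'b"
  assumes covering: "covering V E W F p"
    and a_in_CT: "a \<in> CT V E p"
    and a_no_fixpoint: "\<And>x. x \<in> V \<Longrightarrow> a x \<noteq> x"
    and a_a [simp]: "\<And>x. a (a x) = x"
    and q_image: "q ` V = V'"
    and q_eq_iff: "\<And>x y. x \<in> V \<Longrightarrow> y \<in> V \<Longrightarrow> q y = q x \<longleftrightarrow> y = x \<or> y = a x"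
begin

definition quotient_edge :: "'b \<Rightarrow> 'b \<Rightarrow> bool" where
  "quotient_edge u v \<longleftrightarrow> (\<exists>x y. E x y \<and> q x = u \<and> q y = v)"

definition rep :: "'b \<Rightarrow> 'c" where
  "rep u = (SOME x. x \<in> V \<and> q x = u)"

definition proj :: "'b \<Rightarrow> 'a" where
  "proj u = p (rep u)"

definition centralizer :: "('c \<Rightarrow> 'c) set" where
  "centralizer = {h \<in> Aut V E. h \<circ> a = a \<circ> h}"

definition descend :: "('c \<Rightarrow> 'c) \<Rightarrow> 'b \<Rightarrow> 'b" where
  "descend h u = (if u \<in> V' then q (h (rep u)) else u)"

lemma graph_V: "graph V E"
  using covering by (simp add: covering_def)

lemma a_in_Aut: "a \<in> Aut V E"
  using a_in_CT by (simp add: CT_def)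

lemma p_a: "x \<in> V \<Longrightarrow> p (a x) = p x"
  using a_in_CT by (simp add: CT_def)

lemma q_a [simp]: "q (a x) = q x"
proof (cases "x \<in> V")
  case True
  then show ?thesis using q_eq_iff[OF True Aut_in_V[OF a_in_Aut True]] by simp
next
  case False
  then show ?thesis using a_in_Aut by (simp add: Aut_def)
qed

lemma q_in_V': "x \<in> V \<Longrightarrow> q x \<in> V'"
  using q_image by blast

lemma V'_cases:
  assumes "u \<in> V'"
  obtains x where "x \<in> V" and "u = q x"
  using assms q_image by blast

lemma rep_in_V: "u \<in> V' \<Longrightarrow> rep u \<in> V" and q_rep: "u \<in> V' \<Longrightarrow> q (rep u) = u"
proof -
  assume "u \<in> V'"
  then have "\<exists>x. x \<in> V \<and> q x = u" using q_image by blast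
  then have "rep u \<in> V \<and> q (rep u) = u" unfolding rep_def by (rule someI_ex)
  then show "rep u \<in> V" and "q (rep u) = u" by simp_all
qed

lemma rep_q: "x \<in> V \<Longrightarrow> rep (q x) = x \<or> rep (q x) = a x"
  using rep_in_V[OF q_in_V'] q_rep[OF q_in_V'] q_eq_iff by blast

lemma proj_q: assumes "x \<in> V" shows "proj (q x) = p x"
  using rep_q[OF assms] p_a[OF assms] unfolding proj_def by auto

lemma quotient_edge_q: "E x y \<Longrightarrow> quotient_edge (q x) (q y)"
  unfolding quotient_edge_def by blast

lemma not_edge_partner: "E x y \<Longrightarrow> \<not> E x (a y)"
proof
  assume "E x y" and "E x (a y)"
  moreover have "y \<in> V" using graph_V \<open>E x y\<close> by (simp add: graph_def)
  ultimately have "a y = y" using covering_locally_inj[OF covering] p_a by metis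
  then show False using a_no_fixpoint \<open>y \<in> V\<close> by blast
qed

lemma not_edge_a: "\<not> E x (a x)"
proof
  assume "E x (a x)"
  moreover have "x \<in> V" using graph_V \<open>E x (a x)\<close> by (simp add: graph_def)
  moreover have "F (p x) (p (a x))" using covering \<open>E x (a x)\<close> by (simp add: covering_def)
  ultimately have "F (p x) (p x)" using p_a by simp
  then show False using covering by (simp add: covering_def graph_def)
qed

lemma edge_in_V: "E x y \<Longrightarrow> x \<in> V \<and> y \<in> V"
  using graph_V by (simp add: graph_def)

lemma graph_quotient: "graph V' quotient_edge"
  unfolding graph_def
proof (intro conjI allI impI ballI)
  have "finite V" and "V \<noteq> {}" using graph_V by (simp_all add: graph_def)
  then show "finite V'" and "V' \<noteq> {}" using q_image by auto
  show "u \<in> V'" and "v \<in> V'" if "quotient_edge u v" for u v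
    using that edge_in_V q_in_V' unfolding quotient_edge_def by blast+
  show "quotient_edge v u" if "quotient_edge u v" for u v
  proof -
    have "\<And>x y. E x y \<Longrightarrow> E y x" using graph_V by (simp add: graph_def)
    then show ?thesis using that unfolding quotient_edge_def by blast
  qed
  show "\<not> quotient_edge u u" for u
  proof
    assume "quotient_edge u u"
    then obtain x y where xy: "E x y" "q x = q y" unfolding quotient_edge_def by metis
    have "x \<in> V" "y \<in> V" using edge_in_V[OF xy(1)] by simp_all
    then have "y = x \<or> y = a x" using q_eq_iff[of x y] xy(2)[symmetric] by blast
    moreover have "\<not> E x x" using graph_V by (simp add: graph_def)
    ultimately show False using xy(1) not_edge_a[of x] by auto
  qed
  show "quotient_edge\<^sup>*\<^sup>* u v" if uv: "u \<in> V'" "v \<in> V'" for u v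
  proof -
    obtain x where x: "x \<in> V" "u = q x" using uv(1) by (rule V'_cases)
    obtain y where y: "y \<in> V" "v = q y" using uv(2) by (rule V'_cases)
    have "E\<^sup>*\<^sup>* x y" using graph_V x(1) y(1) by (simp add: graph_def)
    then have "quotient_edge\<^sup>*\<^sup>* (q x) (q y)"
    proof (induction rule: rtranclp_induct)
      case (step y z)
      from step.IH quotient_edge_q[OF step.hyps(2)] show ?case
        by (rule rtranclp.rtrancl_into_rtrancl)
    qed simp
    then show ?thesis using x(2) y(2) by simp
  qed
qed


lemma covering_q: "covering V E V' quotient_edge q"
  unfolding covering_def
proof (intro conjI allI impI ballI)
  show "graph V E" by (rule graph_V)
  show "graph V' quotient_edge" by (rule graph_quotient)
  show "q ` V = V'" by (rule q_image)
  show "quotient_edge (q x) (q y)" if "E x y" for x y using that by (rule quotient_edge_q)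
  show "bij_betw q {y. E x y} {v. quotient_edge (q x) v}" if x: "x \<in> V" for x
    unfolding bij_betw_def
  proof
    show "inj_on q {y. E x y}"
    proof (rule inj_onI)
      fix y y' assume "y \<in> {y. E x y}" "y' \<in> {y. E x y}" "q y = q y'"
      then have "E x y" "E x y'" "y \<in> V" "y' \<in> V" "q y' = q y" using edge_in_V by auto
      then have "y' = y \<or> y' = a y" using q_eq_iff[of y y'] by simp
      then show "y = y'" using not_edge_partner[OF \<open>E x y\<close>] \<open>E x y'\<close> by auto
    qed
    show "q ` {y. E x y} = {v. quotient_edge (q x) v}"
    proof
      show "q ` {y. E x y} \<subseteq> {v. quotient_edge (q x) v}" using quotient_edge_q by auto
      show "{v. quotient_edge (q x) v} \<subseteq> q ` {y. E x y}"
      proof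
        fix v assume "v \<in> {v. quotient_edge (q x) v}"
        then obtain x' y where xy: "E x' y" "q x' = q x" "q y = v"
          unfolding quotient_edge_def by blast
        have "x' \<in> V" using edge_in_V xy(1) by blast
        then consider "x' = x" | "x' = a x" using q_eq_iff[OF x, of x'] xy(2) by auto
        then show "v \<in> q ` {y. E x y}"
        proof cases
          case 1
          then show ?thesis using xy by auto
        next
          case 2
          then have "E x (a y)" using xy(1) Aut_edge_iff[OF graph_V a_in_Aut, of x' y] by simp
          then show ?thesis using xy(3) q_a[of y] by (metis imageI mem_Collect_eq)
        qed
      qed
    qed
  qed
qed

lemma a_in_CT_q: "a \<in> CT V E q"
  using a_in_Aut by (simp add: CT_def)

lemma a_neq_id: "a \<noteq> id"
proof
  assume "a = id"
  obtain x where "x \<in> V" using graph_V by (auto simp: graph_def)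
  then show False using a_no_fixpoint \<open>a = id\<close> by simp
qed

lemma two_cover_q: "two_cover V E V' quotient_edge q"
proof (rule two_coverI(1)[OF covering_q a_in_CT_q a_neq_id])
  show "y = x \<or> y = a x" if "x \<in> V" "y \<in> V" "q x = q y" for x y
    using q_eq_iff[OF that(1,2)] that(3) by simp
qed

lemma covering_proj: "covering V' quotient_edge W F proj"
  using covering covering_q proj_q by (rule covering_factor)

lemma centralizerI: "h \<in> Aut V E \<Longrightarrow> (\<And>x. h (a x) = a (h x)) \<Longrightarrow> h \<in> centralizer"
  by (simp add: centralizer_def fun_eq_iff)

lemma centralizerD:
  assumes "h \<in> centralizer" shows "h \<in> Aut V E" and "h (a x) = a (h x)"
  using assms by (auto simp: centralizer_def fun_eq_iff)

lemma id_in_centralizer: "id \<in> centralizer"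
  by (rule centralizerI) (simp_all add: id_in_Aut)

lemma centralizer_comp:
  assumes "h \<in> centralizer" and "k \<in> centralizer" shows "h \<circ> k \<in> centralizer"
  by (intro centralizerI Aut_comp) (simp_all add: assms centralizerD)

lemma inv_in_centralizer:
  assumes h: "h \<in> centralizer" shows "inv h \<in> centralizer"
proof (rule centralizerI)
  have h_Aut: "h \<in> Aut V E" using h by (rule centralizerD)
  then show "inv h \<in> Aut V E" by (rule inv_in_Aut)
  fix x
  have "h (a (inv h x)) = h (inv h (a x))"
    using centralizerD(2)[OF h] Aut_inverses[OF h_Aut] by simp
  then show "inv h (a x) = a (inv h x)" using Aut_inj[OF h_Aut] by metis
qed

lemma descend_q:
  assumes h: "h \<in> centralizer" and x: "x \<in> V"
  shows "descend h (q x) = q (h x)"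
proof -
  have "q (h (rep (q x))) = q (h x)" using rep_q[OF x] centralizerD(2)[OF h] by auto
  then show ?thesis using q_in_V'[OF x] by (simp add: descend_def)
qed

lemma descend_outside: "u \<notin> V' \<Longrightarrow> descend h u = u"
  by (simp add: descend_def)

lemma descend_in_V':
  assumes h: "h \<in> centralizer" and u: "u \<in> V'"
  shows "descend h u \<in> V'"
  using q_in_V'[OF Aut_in_V[OF centralizerD(1)[OF h] rep_in_V[OF u]]] u by (simp add: descend_def)

lemma descend_comp:
  assumes h: "h \<in> centralizer" and k: "k \<in> centralizer"
  shows "descend (h \<circ> k) = descend h \<circ> descend k"
proof
  fix u
  show "descend (h \<circ> k) u = (descend h \<circ> descend k) u"
  proof (cases "u \<in> V'")
    case True
    then obtain x where "x \<in> V" "u = q x" by (rule V'_cases)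
    then show ?thesis
      using descend_q[OF centralizer_comp[OF h k]] descend_q[OF h] descend_q[OF k]
        Aut_in_V[OF centralizerD(1)[OF k]] by simp
  next
    case False
    then show ?thesis by (simp add: descend_outside)
  qed
qed

lemma descend_id [simp]: "descend id = id"
  using q_rep by (auto simp: descend_def fun_eq_iff)

lemma descend_a: "descend a = id"
  using q_rep by (auto simp: descend_def fun_eq_iff)

lemma descend_inverses:
  assumes h: "h \<in> centralizer"
  shows "descend (inv h) \<circ> descend h = id" and "descend h \<circ> descend (inv h) = id"
proof -
  have "inv h \<circ> h = id" and "h \<circ> inv h = id"
    using permutes_inv_o[OF Aut_permutes[OF centralizerD(1)[OF h]]] by simp_all
  then show "descend (inv h) \<circ> descend h = id" and "descend h \<circ> descend (inv h) = id"
    using descend_comp[OF inv_in_centralizer[OF h] h] descend_comp[OF h inv_in_centralizer[OF h]]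
    by simp_all
qed

lemma descend_inv:
  assumes "h \<in> centralizer" shows "inv (descend h) = descend (inv h)"
  using descend_inverses(2)[OF assms] descend_inverses(1)[OF assms] by (rule inv_unique_comp)

lemma descend_edge:
  assumes h: "h \<in> centralizer" and "quotient_edge u v"
  shows "quotient_edge (descend h u) (descend h v)"
proof -
  obtain x y where xy: "E x y" "q x = u" "q y = v"
    using assms(2) unfolding quotient_edge_def by blast
  then have "descend h u = q (h x)" and "descend h v = q (h y)"
    using descend_q[OF h] edge_in_V by auto
  moreover have "E (h x) (h y)" using Aut_edge_iff[OF graph_V centralizerD(1)[OF h]] xy(1) by simp
  ultimately show ?thesis using quotient_edge_q by simp
qed

lemma descend_in_Aut:
  assumes h: "h \<in> centralizer" shows "descend h \<in> Aut V' quotient_edge"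
proof (rule AutI)
  have h': "inv h \<in> centralizer" using h by (rule inv_in_centralizer)
  have inverse: "descend (inv h) (descend h u) = u" "descend h (descend (inv h) u) = u" for u
    using descend_inverses[OF h] by (simp_all add: fun_eq_iff)
  show "descend h permutes V'"
  proof (rule bij_imp_permutes)
    show "bij_betw (descend h) V' V'"
      by (rule bij_betw_byWitness[where f' = "descend (inv h)"])
        (use descend_in_V'[OF h] descend_in_V'[OF h'] inverse in auto)
    show "descend h u = u" if "u \<notin> V'" for u using that by (rule descend_outside)
  qed
  show "quotient_edge (descend h u) (descend h v) \<longleftrightarrow> quotient_edge u v" for u v
  proof
    assume "quotient_edge (descend h u) (descend h v)"
    then have "quotient_edge (descend (inv h) (descend h u)) (descend (inv h) (descend h v))"
      by (rule descend_edge[OF h'])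
    then show "quotient_edge u v" by (simp add: inverse)
  qed (rule descend_edge[OF h])
qed

lemma descend_lift:
  assumes h: "h \<in> centralizer" and lift: "is_lift V p g h"
  shows "is_lift V' proj g (descend h)"
  unfolding is_lift_def
proof
  fix u assume "u \<in> V'"
  then obtain x where x: "x \<in> V" "u = q x" by (rule V'_cases)
  have "g (proj (q x)) = p (h x)" using lift x(1) proj_q by (simp add: is_lift_def)
  also have "\<dots> = proj (descend h (q x))"
    using descend_q[OF h x(1)] proj_q Aut_in_V[OF centralizerD(1)[OF h] x(1)] by simp
  finally show "g (proj u) = proj (descend h u)" using x(2) by simp
qed

lemma descend_inj_up_to_a:
  assumes h: "h \<in> centralizer" and k: "k \<in> centralizer" and eq: "descend h = descend k"
  shows "h = k \<or> h = a \<circ> k"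
proof -
  have h_Aut: "h \<in> Aut V E" and k_Aut: "k \<in> Aut V E" using h k by (simp_all add: centralizerD)
  have same_q: "q (h x) = q (k x)" if "x \<in> V" for x
    using descend_q[OF h that] descend_q[OF k that] eq by simp
  obtain x0 where x0: "x0 \<in> V" using graph_V by (auto simp: graph_def)
  have "h x0 = k x0 \<or> h x0 = a (k x0)"
    using q_eq_iff[OF Aut_in_V[OF k_Aut x0] Aut_in_V[OF h_Aut x0]] same_q[OF x0] by simp
  then show ?thesis
  proof
    assume "h x0 = k x0"
    then show ?thesis using covering_Aut_eqI[OF covering_q h_Aut k_Aut same_q x0] by blast
  next
    assume "h x0 = a (k x0)"
    then have agree: "h x0 = (a \<circ> k) x0" by simp
    have "q (h x) = q ((a \<circ> k) x)" if "x \<in> V" for x using same_q[OF that] by simp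
    then have "h = a \<circ> k"
      using agree by (rule covering_Aut_eqI[OF covering_q h_Aut Aut_comp[OF a_in_Aut k_Aut] _ x0])
    then show ?thesis ..
  qed
qed

lemma aut_group_descend_image:
  assumes K: "aut_group V E K" and K_sub: "K \<subseteq> centralizer"
  shows "aut_group V' quotient_edge (descend ` K)"
  unfolding aut_group_def
proof (intro conjI ballI)
  show "descend ` K \<subseteq> Aut V' quotient_edge" using K_sub descend_in_Aut by blast
  have "id \<in> K" using K by (simp add: aut_group_def)
  then have "descend id \<in> descend ` K" by (rule imageI)
  then show "id \<in> descend ` K" by simp
next
  fix f f' assume "f \<in> descend ` K" "f' \<in> descend ` K"
  then obtain h h' where hh': "h \<in> K" "h' \<in> K" and "f = descend h" "f' = descend h'" by blast
  moreover have "h \<in> centralizer" "h' \<in> centralizer" using K_sub hh' by auto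
  ultimately have "f \<circ> f' = descend (h \<circ> h')" using descend_comp[of h h'] by simp
  moreover have "h \<circ> h' \<in> K" using K hh' by (simp add: aut_group_def)
  ultimately show "f \<circ> f' \<in> descend ` K" by simp
next
  fix f assume "f \<in> descend ` K"
  then obtain h where h: "h \<in> K" and "f = descend h" by blast
  moreover have "h \<in> centralizer" using K_sub h by auto
  ultimately have "inv f = descend (inv h)" using descend_inv[of h] by simp
  moreover have "inv h \<in> K" using K h by (simp add: aut_group_def)
  ultimately show "inv f \<in> descend ` K" by simp
qed

lemma aut_group_descend_preimage:
  assumes K: "aut_group V E K" and K_sub: "K \<subseteq> centralizer"
    and L: "aut_group V' quotient_edge L"
  shows "aut_group V E {h \<in> K. descend h \<in> L}"
  unfolding aut_group_def
proof (intro conjI ballI)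
  show "{h \<in> K. descend h \<in> L} \<subseteq> Aut V E" using K by (auto simp: aut_group_def)
  show "id \<in> {h \<in> K. descend h \<in> L}" using K L by (simp add: aut_group_def)
next
  fix h h' assume h: "h \<in> {h \<in> K. descend h \<in> L}" and h': "h' \<in> {h \<in> K. descend h \<in> L}"
  then have "descend (h \<circ> h') = descend h \<circ> descend h'" using descend_comp K_sub by blast
  then show "h \<circ> h' \<in> {h \<in> K. descend h \<in> L}" using h h' K L by (simp add: aut_group_def)
next
  fix h assume h: "h \<in> {h \<in> K. descend h \<in> L}"
  then have "descend (inv h) = inv (descend h)" using descend_inv K_sub by auto
  then show "inv h \<in> {h \<in> K. descend h \<in> L}" using h K L by (simp add: aut_group_def)
qed

end

section \<open>Replacing the middle cover\<close>

lemma is_section_iff: "is_section V' V p S \<longleftrightarrow> S \<subseteq> V' \<and> (\<forall>y\<in>V. \<exists>!s. s \<in> S \<and> p s = y)"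
proof -
  have card_iff: "card {s \<in> S. p s = y} = 1 \<longleftrightarrow> (\<exists>!s. s \<in> S \<and> p s = y)" for y
  proof
    assume "card {s \<in> S. p s = y} = 1"
    then obtain s where "{s \<in> S. p s = y} = {s}" by (auto simp: card_1_singleton_iff)
    then show "\<exists>!s. s \<in> S \<and> p s = y" by (auto simp: set_eq_iff)
  next
    assume "\<exists>!s. s \<in> S \<and> p s = y"
    then obtain s where "{s \<in> S. p s = y} = {s}" by auto
    then show "card {s \<in> S. p s = y} = 1" by simp
  qed
  show ?thesis
    unfolding is_section_def
  proof (rule conj_cong[OF refl])
    assume "S \<subseteq> V'"
    then have "S \<inter> {x \<in> V'. p x = y} = {s \<in> S. p s = y}" for y by auto
    then show "(\<forall>y\<in>V. card (S \<inter> {x \<in> V'. p x = y}) = 1) \<longleftrightarrow> (\<forall>y\<in>V. \<exists>!s. s \<in> S \<and> p s = y)"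
      using card_iff by simp
  qed
qed

locale split_chain =
  fixes V0 :: "'a set" and E0 :: "'a \<Rightarrow> 'a \<Rightarrow> bool"
    and V1 :: "'b set" and E1 :: "'b \<Rightarrow> 'b \<Rightarrow> bool" and p1 :: "'b \<Rightarrow> 'a"
    and V2 :: "'c set" and E2 :: "'c \<Rightarrow> 'c \<Rightarrow> bool" and p2 :: "'c \<Rightarrow> 'b"
    and G :: "('a \<Rightarrow> 'a) set" and G1 :: "('b \<Rightarrow> 'b) set" and G2 :: "('c \<Rightarrow> 'c) set"
    and H :: "('c \<Rightarrow> 'c) set"
  assumes admissible: "admissible2 V2 E2 p2 V1 E1 p1 V0 E0 G G1 G2"
    and complement: "complement V2 E2 p2 G1 H"
begin

abbreviation "c1 \<equiv> deck V1 E1 p1"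
abbreviation "c2 \<equiv> deck V2 E2 p2"

lemma two_cover1: "two_cover V1 E1 V0 E0 p1"
  and two_cover2: "two_cover V2 E2 V1 E1 p2"
  and aut_group_G: "aut_group V0 E0 G"
  and all_lift1: "all_lift V1 E1 p1 G"
  and all_lift2: "all_lift V2 E2 p2 G1"
  and G1_eq: "G1 = lifted_group V1 E1 p1 G"
  and G2_eq: "G2 = lifted_group V2 E2 p2 G1"
  using admissible unfolding admissible2_def by blast+

lemma covering1: "covering V1 E1 V0 E0 p1"
  using two_cover1 by (rule two_cover_covering)

lemma covering2: "covering V2 E2 V1 E1 p2"
  using two_cover2 by (rule two_cover_covering)

lemma p2_in_V1: "x \<in> V2 \<Longrightarrow> p2 x \<in> V1"
  using covering2 by (auto simp: covering_def)

lemma c1_c1 [simp]: "c1 (c1 u) = u"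
  using two_cover1 by (rule deck_deck)

lemma c2_c2 [simp]: "c2 (c2 x) = x"
  using two_cover2 by (rule deck_deck)

lemma aut_group_G1: "aut_group V1 E1 G1"
  unfolding G1_eq using aut_group_G by (rule lifted_group_aut)

lemma aut_group_G2: "aut_group V2 E2 G2"
  unfolding G2_eq using aut_group_G1 by (rule lifted_group_aut)

lemma aut_group_H: "aut_group V2 E2 H"
  using complement by (simp add: complement_def)

lemma G2_Aut: "h \<in> G2 \<Longrightarrow> h \<in> Aut V2 E2"
  using aut_group_G2 by (auto simp: aut_group_def)

lemma G2_comp: "h \<in> G2 \<Longrightarrow> k \<in> G2 \<Longrightarrow> h \<circ> k \<in> G2"
  using aut_group_G2 by (simp add: aut_group_def)

lemma H_subset_G2: "H \<subseteq> G2"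
  using complement G2_eq by (simp add: complement_def)

lemma c1_in_G1: "c1 \<in> G1"
  using deck_in_lifted_group[OF two_cover1] aut_group_G G1_eq by (simp add: aut_group_def)

lemma c2_in_G2: "c2 \<in> G2"
  using deck_in_lifted_group[OF two_cover2] aut_group_G1 G2_eq by (simp add: aut_group_def)

lemma c2_not_in_H: "c2 \<notin> H"
  using two_cover2 complement by (rule deck_not_in_complement)

lemma CT2_subset_G2: "CT V2 E2 p2 \<subseteq> G2"
  using two_cover_CT_eq[OF two_cover2] c2_in_G2 aut_group_G2 by (simp add: aut_group_def)

lemma lift_of_c1_in_H: "\<exists>a. a \<in> H \<and> is_lift V2 p2 c1 a"
proof -
  obtain h where h: "h \<in> Aut V2 E2" "is_lift V2 p2 c1 h"
    using all_lift2 c1_in_G1 by (auto simp: all_lift_def)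
  then have "h \<in> lifted_group V2 E2 p2 G1" using c1_in_G1 by (auto simp: lifted_group_def)
  then have "h \<in> H \<or> h \<circ> c2 \<in> H" by (rule complement_cases[OF two_cover2 complement])
  moreover have "is_lift V2 p2 c1 (h \<circ> c2)"
    unfolding is_lift_def
  proof
    fix x assume x: "x \<in> V2"
    then have "c1 (p2 (c2 x)) = p2 (h (c2 x))"
      using h(2) Aut_in_V[OF deck_in_Aut[OF two_cover2]] by (simp add: is_lift_def)
    then show "c1 (p2 x) = p2 ((h \<circ> c2) x)" using deck_proj[OF two_cover2 x] by simp
  qed
  ultimately show ?thesis using h(2) by blast
qed

definition a :: "'c \<Rightarrow> 'c" where
  "a = (SOME a. a \<in> H \<and> is_lift V2 p2 c1 a)"

lemma a_in_H: "a \<in> H" and a_lifts_c1: "is_lift V2 p2 c1 a"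
  using someI_ex[OF lift_of_c1_in_H] by (simp_all add: a_def)

lemma a_in_Aut: "a \<in> Aut V2 E2"
  using a_in_H aut_group_H by (auto simp: aut_group_def)

lemma a_in_V2: "x \<in> V2 \<Longrightarrow> a x \<in> V2"
  using a_in_Aut by (rule Aut_in_V)

lemma p2_a: "x \<in> V2 \<Longrightarrow> p2 (a x) = c1 (p2 x)"
  using a_lifts_c1 by (simp add: is_lift_def)

lemma a_no_fixpoint: "x \<in> V2 \<Longrightarrow> a x \<noteq> x"
  using p2_a deck_no_fixpoint[OF two_cover1 p2_in_V1] by metis

lemma a_a [simp]: "a (a x) = x"
proof -
  have "a \<circ> a \<in> H" using a_in_H aut_group_H by (simp add: aut_group_def)
  moreover have "a \<circ> a \<in> CT V2 E2 p2"
    using Aut_comp[OF a_in_Aut a_in_Aut] p2_a a_in_V2 p2_in_V1 by (simp add: CT_def)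
  ultimately have "a \<circ> a = id" using complement by (auto simp: complement_def)
  then show ?thesis by (simp add: fun_eq_iff)
qed

lemma a_in_CT: "a \<in> CT V2 E2 (p1 \<circ> p2)"
  using a_in_Aut p2_a deck_proj[OF two_cover1] p2_in_V1 by (simp add: CT_def)

lemma a_c2: "a (c2 x) = c2 (a x)"
  using deck_commute[OF two_cover2 a_in_Aut a_lifts_c1] by (simp add: fun_eq_iff)

text \<open>
  Both \<open>h \<circ> a\<close> and \<open>a \<circ> h\<close> lift \<open>g\<^sub>1 \<circ> c\<^sub>1 = c\<^sub>1 \<circ> g\<^sub>1\<close>, so they agree up to \<open>c\<^sub>2\<close>;
  a discrepancy would put \<open>c\<^sub>2 = a h a h\<^sup>-\<^sup>1\<close> into \<open>H\<close>.
\<close>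

lemma H_commute_a:
  assumes h: "h \<in> H" shows "h (a x) = a (h x)"
proof -
  have h_Aut: "h \<in> Aut V2 E2" using h aut_group_H by (auto simp: aut_group_def)
  obtain g1 where g1: "g1 \<in> G1" "is_lift V2 p2 g1 h"
    using h H_subset_G2 G2_eq by (auto simp: lifted_group_def)
  then obtain g where "g1 \<in> Aut V1 E1" "is_lift V1 p1 g g1" using G1_eq by (auto simp: lifted_group_def)
  then have g1_c1: "g1 \<circ> c1 = c1 \<circ> g1" by (rule deck_commute[OF two_cover1])
  have "is_lift V2 p2 (g1 \<circ> c1) (h \<circ> a)" using g1(2) a_lifts_c1 a_in_V2 by (rule is_lift_comp)
  moreover have "is_lift V2 p2 (g1 \<circ> c1) (a \<circ> h)"
    using is_lift_comp[OF a_lifts_c1 g1(2)] Aut_in_V[OF h_Aut] g1_c1 by simp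
  ultimately have "a \<circ> h = h \<circ> a \<or> a \<circ> h = c2 \<circ> (h \<circ> a)"
    using lift_unique_up_to_deck[OF two_cover2 Aut_comp[OF h_Aut a_in_Aut] Aut_comp[OF a_in_Aut h_Aut]]
    by blast
  moreover have "a \<circ> h \<noteq> c2 \<circ> (h \<circ> a)"
  proof
    assume swap: "a \<circ> h = c2 \<circ> (h \<circ> a)"
    have "c2 = a \<circ> h \<circ> a \<circ> inv h"
    proof
      fix z
      have "a (h (a (inv h z))) = c2 (h (a (a (inv h z))))" using swap by (simp add: fun_eq_iff)
      then show "c2 z = (a \<circ> h \<circ> a \<circ> inv h) z" using Aut_inverses(1)[OF h_Aut] by simp
    qed
    moreover have "a \<circ> h \<circ> a \<circ> inv h \<in> H"
      using aut_group_H h a_in_H by (simp add: aut_group_def)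
    ultimately show False using c2_not_in_H by simp
  qed
  ultimately have "a \<circ> h = h \<circ> a" by blast
  then show ?thesis by (metis comp_apply)
qed

lemma G2_commute_a:
  assumes h: "h \<in> G2" shows "h (a x) = a (h x)"
proof -
  have "h \<in> H \<or> h \<circ> c2 \<in> H"
    using complement_cases[OF two_cover2 complement] h G2_eq by simp
  then show ?thesis
  proof
    assume "h \<in> H"
    then show ?thesis by (rule H_commute_a)
  next
    assume hc2: "h \<circ> c2 \<in> H"
    have "h (a x) = h (c2 (a (c2 x)))" using a_c2[of "c2 x"] by simp
    also have "\<dots> = a (h (c2 (c2 x)))" using H_commute_a[OF hc2, of "c2 x"] by simp
    finally show ?thesis by simp
  qed
qed


text \<open>\<open>X\<^sub>1'\<close> is built on the vertex set \<open>V1\<close> of \<open>X\<^sub>1\<close>: both \<open>V1\<close> and \<open>V2/\<langle>a\<rangle>\<close> have half as many elements as \<open>V2\<close>.\<close>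

lemma quotient_map_exists: "\<exists>q :: 'c \<Rightarrow> 'b. q ` V2 = V1 \<and> (\<forall>x\<in>V2. \<forall>y\<in>V2. q y = q x \<longleftrightarrow> y = x \<or> y = a x)"
proof (rule involution_quotient_map_exists)
  show "finite V2" "finite V1"
    using covering2 by (simp_all add: covering_def graph_def)
  show "card V2 = 2 * card V1" using two_cover2 by (rule card_two_cover)
qed (simp_all add: a_in_V2 a_no_fixpoint)

definition q :: "'c \<Rightarrow> 'b" where
  "q = (SOME q. q ` V2 = V1 \<and> (\<forall>x\<in>V2. \<forall>y\<in>V2. q y = q x \<longleftrightarrow> y = x \<or> y = a x))"

sublocale Q: involution_quotient V2 E2 V0 E0 "p1 \<circ> p2" a V1 q
proof
  show "covering V2 E2 V0 E0 (p1 \<circ> p2)" using covering2 covering1 by (rule covering_comp)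
  show "a \<in> CT V2 E2 (p1 \<circ> p2)" by (rule a_in_CT)
  have "q ` V2 = V1 \<and> (\<forall>x\<in>V2. \<forall>y\<in>V2. q y = q x \<longleftrightarrow> y = x \<or> y = a x)"
    unfolding q_def using quotient_map_exists by (rule someI_ex)
  then show "q ` V2 = V1" and "\<And>x y. x \<in> V2 \<Longrightarrow> y \<in> V2 \<Longrightarrow> q y = q x \<longleftrightarrow> y = x \<or> y = a x"
    by simp_all
qed (simp_all add: a_no_fixpoint)

abbreviation "E1' \<equiv> Q.quotient_edge"
abbreviation "p1' \<equiv> Q.proj"
abbreviation "G1' \<equiv> lifted_group V1 E1' p1' G"

lemma G2_subset_centralizer: "G2 \<subseteq> Q.centralizer"
  using G2_Aut G2_commute_a Q.centralizerI by blast

lemma c2_in_centralizer: "c2 \<in> Q.centralizer"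
  using c2_in_G2 G2_subset_centralizer by blast

lemma p1'_q: "x \<in> V2 \<Longrightarrow> p1' (q x) = p1 (p2 x)"
  using Q.proj_q by simp

lemma fibre_p1_p2:
  assumes x: "x \<in> V2" and y: "y \<in> V2" and eq: "p1 (p2 x) = p1 (p2 y)"
  shows "q y = q x \<or> q y = q (c2 x)"
proof -
  have "p2 y = p2 x \<or> p2 y = c1 (p2 x)"
    using two_cover_fibre[OF two_cover1 p2_in_V1[OF x] p2_in_V1[OF y] eq] .
  then show ?thesis
  proof
    assume "p2 y = p2 x"
    then have "y = x \<or> y = c2 x" using two_cover_fibre[OF two_cover2 x y] by simp
    then show ?thesis by auto
  next
    assume "p2 y = c1 (p2 x)"
    then have "p2 (a x) = p2 y" using p2_a[OF x] by simp
    then have "y = a x \<or> y = c2 (a x)" using two_cover_fibre[OF two_cover2 a_in_V2[OF x] y] by simp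
    moreover have "q (c2 (a x)) = q (c2 x)" using Q.q_a[of "c2 x"] a_c2[of x] by simp
    ultimately show ?thesis by auto
  qed
qed

lemma descend_c2_in_CT: "Q.descend c2 \<in> CT V1 E1' p1'"
  unfolding CT_def
proof (intro CollectI conjI ballI)
  show "Q.descend c2 \<in> Aut V1 E1'" using c2_in_centralizer by (rule Q.descend_in_Aut)
  fix u assume "u \<in> V1"
  then obtain x where x: "x \<in> V2" "u = q x" by (rule Q.V'_cases)
  have "c2 x \<in> V2" using x(1) Aut_in_V[OF deck_in_Aut[OF two_cover2]] by blast
  then show "p1' (Q.descend c2 u) = p1' u"
    using x Q.descend_q[OF c2_in_centralizer x(1)] p1'_q deck_proj[OF two_cover2 x(1)] by simp
qed

lemma descend_c2_neq_id: "Q.descend c2 \<noteq> id"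
proof
  assume "Q.descend c2 = id"
  obtain x where x: "x \<in> V2" using Q.graph_V by (auto simp: graph_def)
  then have c2x: "c2 x \<in> V2" using Aut_in_V[OF deck_in_Aut[OF two_cover2]] by blast
  have "q (c2 x) = q x" using Q.descend_q[OF c2_in_centralizer x] \<open>Q.descend c2 = id\<close> by simp
  then have "c2 x = x \<or> c2 x = a x" using Q.q_eq_iff[OF x c2x] by simp
  moreover have "c2 x \<noteq> x" using deck_no_fixpoint[OF two_cover2 x] .
  moreover have "c2 x \<noteq> a x"
  proof
    assume "c2 x = a x"
    then have "p2 x = c1 (p2 x)" using deck_proj[OF two_cover2 x] p2_a[OF x] by simp
    then show False using deck_no_fixpoint[OF two_cover1 p2_in_V1[OF x]] by simp
  qed
  ultimately show False by blast
qed

lemma two_cover_p1': "two_cover V1 E1' V0 E0 p1'"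
  and CT_p1': "CT V1 E1' p1' = {id, Q.descend c2}"
proof -
  have "v = u \<or> v = Q.descend c2 u" if uv: "u \<in> V1" "v \<in> V1" "p1' u = p1' v" for u v
  proof -
    obtain x where x: "x \<in> V2" "u = q x" using uv(1) by (rule Q.V'_cases)
    obtain y where y: "y \<in> V2" "v = q y" using uv(2) by (rule Q.V'_cases)
    have "p1 (p2 x) = p1 (p2 y)" using uv(3) x y p1'_q by simp
    then show ?thesis using fibre_p1_p2[OF x(1) y(1)] Q.descend_q[OF c2_in_centralizer x(1)] x y by auto
  qed
  then show "two_cover V1 E1' V0 E0 p1'" and "CT V1 E1' p1' = {id, Q.descend c2}"
    using two_coverI[OF Q.covering_proj descend_c2_in_CT descend_c2_neq_id] by simp_all
qed

lemma deck_p1': "deck V1 E1' p1' = Q.descend c2"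
  using CT_p1' descend_c2_neq_id by (rule deck_eqI)


lemma G2_lifts_G:
  assumes h: "h \<in> G2" obtains g where "g \<in> G" and "is_lift V2 (p1 \<circ> p2) g h"
proof -
  obtain g1 where g1: "g1 \<in> G1" "is_lift V2 p2 g1 h" using h G2_eq by (auto simp: lifted_group_def)
  then obtain g where "g \<in> G" "is_lift V1 p1 g g1" using G1_eq by (auto simp: lifted_group_def)
  moreover have "p2 ` V2 \<subseteq> V1" using p2_in_V1 by blast
  ultimately show ?thesis using that is_lift_trans[OF g1(2)] by blast
qed

lemma G_lifts_to_G2:
  assumes g: "g \<in> G" obtains h where "h \<in> G2" and "is_lift V2 (p1 \<circ> p2) g h"
proof -
  obtain g1 where g1: "g1 \<in> Aut V1 E1" "is_lift V1 p1 g g1"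
    using all_lift1 g by (auto simp: all_lift_def)
  then have g1_G1: "g1 \<in> G1" using g G1_eq by (auto simp: lifted_group_def)
  then obtain h where h: "h \<in> Aut V2 E2" "is_lift V2 p2 g1 h"
    using all_lift2 by (auto simp: all_lift_def)
  then have "h \<in> G2" using g1_G1 G2_eq by (auto simp: lifted_group_def)
  moreover have "p2 ` V2 \<subseteq> V1" using p2_in_V1 by blast
  ultimately show ?thesis using that is_lift_trans[OF h(2) g1(2)] by blast
qed

lemma descend_G2_subset: "Q.descend ` G2 \<subseteq> G1'"
proof
  fix f assume "f \<in> Q.descend ` G2"
  then obtain h where h: "h \<in> G2" and f: "f = Q.descend h" by blast
  obtain g where "g \<in> G" "is_lift V2 (p1 \<circ> p2) g h" using h by (rule G2_lifts_G)
  moreover have "h \<in> Q.centralizer" using h G2_subset_centralizer by blast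
  ultimately show "f \<in> G1'"
    using Q.descend_in_Aut Q.descend_lift f by (auto simp: lifted_group_def)
qed

lemma G1'_eq: "G1' = Q.descend ` G2"
proof
  show "G1' \<subseteq> Q.descend ` G2"
  proof
    fix f assume "f \<in> G1'"
    then obtain g where f: "f \<in> Aut V1 E1'" "g \<in> G" "is_lift V1 p1' g f"
      by (auto simp: lifted_group_def)
    obtain h where h: "h \<in> G2" "is_lift V2 (p1 \<circ> p2) g h" using f(2) by (rule G_lifts_to_G2)
    have h_centr: "h \<in> Q.centralizer" using h(1) G2_subset_centralizer by blast
    have "f = Q.descend h \<or> f = Q.descend c2 \<circ> Q.descend h"
      using lift_unique_up_to_deck[OF two_cover_p1' Q.descend_in_Aut[OF h_centr] f(1)
          Q.descend_lift[OF h_centr h(2)] f(3)] deck_p1' by simp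
    moreover have "Q.descend c2 \<circ> Q.descend h = Q.descend (c2 \<circ> h)"
      using Q.descend_comp[OF c2_in_centralizer h_centr] by simp
    moreover have "c2 \<circ> h \<in> G2" using G2_comp[OF c2_in_G2 h(1)] .
    ultimately show "f \<in> Q.descend ` G2" using h(1) by auto
  qed
  show "Q.descend ` G2 \<subseteq> G1'" by (rule descend_G2_subset)
qed

lemma CT_p1'_subset_G1': "CT V1 E1' p1' \<subseteq> G1'"
proof -
  have "Q.descend id \<in> G1'" "Q.descend c2 \<in> G1'"
    using descend_G2_subset c2_in_G2 aut_group_G2 by (auto simp: aut_group_def)
  then show ?thesis using CT_p1' by simp
qed

lemma aut_group_G1': "aut_group V1 E1' G1'"
  using aut_group_G by (rule lifted_group_aut)

lemma H_subset_centralizer: "H \<subseteq> Q.centralizer"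
  using H_subset_G2 G2_subset_centralizer by blast

lemma descend_H_inter_CT: "Q.descend ` H \<inter> CT V1 E1' p1' = {id}"
proof
  have "id \<in> H" using aut_group_H by (simp add: aut_group_def)
  then have "Q.descend id \<in> Q.descend ` H" by (rule imageI)
  then show "{id} \<subseteq> Q.descend ` H \<inter> CT V1 E1' p1'" using id_in_CT by simp
  show "Q.descend ` H \<inter> CT V1 E1' p1' \<subseteq> {id}"
  proof
    fix f assume f: "f \<in> Q.descend ` H \<inter> CT V1 E1' p1'"
    then have "f \<in> {id, Q.descend c2}" using CT_p1' by simp
    obtain h where h: "h \<in> H" "f = Q.descend h" using f by blast
    have "Q.descend h \<noteq> Q.descend c2"
    proof
      assume "Q.descend h = Q.descend c2"
      moreover have "h \<in> Q.centralizer" using h(1) H_subset_centralizer by blast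
      ultimately have "h = c2 \<or> h = a \<circ> c2"
        using c2_in_centralizer Q.descend_inj_up_to_a by simp
      moreover have "a \<circ> (a \<circ> c2) = c2" by (simp add: fun_eq_iff)
      moreover have "a \<circ> h \<in> H" using aut_group_H a_in_H h(1) by (simp add: aut_group_def)
      ultimately show False using c2_not_in_H h(1) by auto
    qed
    then show "f \<in> {id}" using h(2) \<open>f \<in> {id, Q.descend c2}\<close> by auto
  qed
qed

lemma G1'_subset_descend_H_times_CT:
  "G1' \<subseteq> {k \<circ> c |k c. k \<in> Q.descend ` H \<and> c \<in> CT V1 E1' p1'}"
proof
  fix f assume "f \<in> G1'"
  then obtain h' where h': "h' \<in> G2" "f = Q.descend h'" using G1'_eq by blast
  then have "h' \<in> lifted_group V2 E2 p2 G1" using G2_eq by simp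
  then obtain h c where hc: "h' = h \<circ> c" "h \<in> H" "c \<in> CT V2 E2 p2"
    by (rule complement_decompose[OF complement])
  have c: "c = id \<or> c = c2" using hc(3) two_cover_CT_eq[OF two_cover2] by simp
  then have "c \<in> Q.centralizer" using c2_in_centralizer Q.id_in_centralizer by auto
  moreover have "h \<in> Q.centralizer" using hc(2) H_subset_centralizer by blast
  ultimately have f_eq: "f = Q.descend h \<circ> Q.descend c"
    using h'(2) hc(1) Q.descend_comp by simp
  have "Q.descend c \<in> CT V1 E1' p1'" unfolding CT_p1' using c by (elim disjE) simp_all
  moreover have "Q.descend h \<in> Q.descend ` H" using hc(2) by (rule imageI)
  ultimately have "Q.descend h \<circ> Q.descend c \<in> {k \<circ> c |k c. k \<in> Q.descend ` H \<and> c \<in> CT V1 E1' p1'}"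
    by blast
  then show "f \<in> {k \<circ> c |k c. k \<in> Q.descend ` H \<and> c \<in> CT V1 E1' p1'}"
    by (simp only: f_eq)
qed

lemma complement_descend_H: "complement V1 E1' p1' G (Q.descend ` H)"
  unfolding complement_def
proof (intro conjI)
  show "aut_group V1 E1' (Q.descend ` H)"
    using aut_group_H H_subset_centralizer by (rule Q.aut_group_descend_image)
  show H'_sub: "Q.descend ` H \<subseteq> G1'" unfolding G1'_eq using H_subset_G2 by (rule image_mono)
  show "Q.descend ` H \<inter> CT V1 E1' p1' = {id}" by (rule descend_H_inter_CT)
  show "{k \<circ> c |k c. k \<in> Q.descend ` H \<and> c \<in> CT V1 E1' p1'} = G1'"
    using aut_group_comp_subset[OF aut_group_G1' H'_sub CT_p1'_subset_G1']
      G1'_subset_descend_H_times_CT by (rule subset_antisym)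
qed

lemma descend_c2_c2: "Q.descend c2 \<circ> Q.descend c2 = id"
proof -
  have "c2 \<circ> c2 = id" by (simp add: fun_eq_iff)
  then show ?thesis using Q.descend_comp[OF c2_in_centralizer c2_in_centralizer] by simp
qed

lemma G2_subset_preimage_times_CT:
  assumes K: "complement V1 E1' p1' G K"
  shows "G2 \<subseteq> {h \<circ> c |h c. h \<in> {h \<in> G2. Q.descend h \<in> K} \<and> c \<in> CT V2 E2 p2}"
proof
  let ?P = "{h \<in> G2. Q.descend h \<in> K}"
  fix h assume h: "h \<in> G2"
  then have h_centr: "h \<in> Q.centralizer" using G2_subset_centralizer by blast
  have "Q.descend h \<in> {k \<circ> c |k c. k \<in> K \<and> c \<in> CT V1 E1' p1'}"
    using K h descend_G2_subset by (auto simp: complement_def)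
  then obtain k c where kc: "Q.descend h = k \<circ> c" "k \<in> K" "c \<in> CT V1 E1' p1'" by blast
  have "c = id \<or> c = Q.descend c2" using kc(3) CT_p1' by simp
  then show "h \<in> {h \<circ> c |h c. h \<in> ?P \<and> c \<in> CT V2 E2 p2}"
  proof
    assume "c = id"
    then have "h \<in> ?P" using h kc(1,2) by simp
    moreover have "h = h \<circ> id" by simp
    ultimately show ?thesis using id_in_CT by blast
  next
    assume "c = Q.descend c2"
    then have "Q.descend (h \<circ> c2) = k \<circ> (Q.descend c2 \<circ> Q.descend c2)"
      using Q.descend_comp[OF h_centr c2_in_centralizer] kc(1) by (simp add: comp_assoc)
    then have "h \<circ> c2 \<in> ?P" using descend_c2_c2 kc(2) G2_comp[OF h c2_in_G2] by simp
    moreover have "h = (h \<circ> c2) \<circ> c2" by (simp add: fun_eq_iff)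
    moreover have "c2 \<in> CT V2 E2 p2" using deck_in_CT[OF two_cover2] .
    ultimately show ?thesis by blast
  qed
qed

lemma complement_preimage:
  assumes K: "complement V1 E1' p1' G K"
  shows "complement V2 E2 p2 G1 {h \<in> G2. Q.descend h \<in> K}"
  unfolding complement_def G2_eq[symmetric]
proof (intro conjI)
  let ?P = "{h \<in> G2. Q.descend h \<in> K}"
  have K_aut: "aut_group V1 E1' K" and K_CT: "K \<inter> CT V1 E1' p1' = {id}"
    using K by (simp_all add: complement_def)
  show "aut_group V2 E2 ?P"
    using aut_group_G2 G2_subset_centralizer K_aut by (rule Q.aut_group_descend_preimage)
  show P_sub: "?P \<subseteq> G2" by blast
  show "?P \<inter> CT V2 E2 p2 = {id}"
  proof
    have "id \<in> ?P" using aut_group_G2 K_aut by (simp add: aut_group_def)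
    then show "{id} \<subseteq> ?P \<inter> CT V2 E2 p2" using id_in_CT by blast
    have "Q.descend c2 \<notin> K" using K_CT descend_c2_in_CT descend_c2_neq_id by blast
    then have "c2 \<notin> ?P" by simp
    then show "?P \<inter> CT V2 E2 p2 \<subseteq> {id}" using two_cover_CT_eq[OF two_cover2] by blast
  qed
  show "{h \<circ> c |h c. h \<in> ?P \<and> c \<in> CT V2 E2 p2} = G2"
    using aut_group_comp_subset[OF aut_group_G2 P_sub CT2_subset_G2]
      G2_subset_preimage_times_CT[OF K] by (rule subset_antisym)
qed

lemma admissible_quotient: "admissible2 V2 E2 q V1 E1' p1' V0 E0 G G1' (lifted_group V2 E2 q G1')"
  unfolding admissible2_def
proof (intro conjI)
  show "two_cover V1 E1' V0 E0 p1'" by (rule two_cover_p1')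
  show "two_cover V2 E2 V1 E1' q" by (rule Q.two_cover_q)
  show "aut_group V0 E0 G" by (rule aut_group_G)
  show "all_lift V1 E1' p1' G" unfolding all_lift_def
  proof
    fix g assume "g \<in> G"
    then obtain h where h: "h \<in> G2" "is_lift V2 (p1 \<circ> p2) g h" by (rule G_lifts_to_G2)
    then have "h \<in> Q.centralizer" using G2_subset_centralizer by blast
    then show "\<exists>f\<in>Aut V1 E1'. is_lift V1 p1' g f"
      using Q.descend_in_Aut Q.descend_lift h(2) by blast
  qed
  show "all_lift V2 E2 q G1'" unfolding all_lift_def
  proof
    fix f assume "f \<in> G1'"
    then obtain h where h: "h \<in> G2" "f = Q.descend h" using G1'_eq by blast
    then have "is_lift V2 q f h"
      using Q.descend_q G2_subset_centralizer by (auto simp: is_lift_def)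
    then show "\<exists>h\<in>Aut V2 E2. is_lift V2 q f h" using h(1) G2_Aut by blast
  qed
qed simp_all

lemma split_p1': "split V1 E1' p1' G"
  using complement_descend_H by (auto simp: split_def)

lemma split_transitive_quotient:
  assumes "split_transitive V2 E2 p2 G1"
  shows "split_transitive V1 E1' p1' G"
  unfolding split_transitive_def
proof (intro conjI allI impI)
  show "split V1 E1' p1' G" by (rule split_p1')
  fix K assume "complement V1 E1' p1' G K"
  then have "transitive_on V2 {h \<in> G2. Q.descend h \<in> K}"
    using assms complement_preimage by (simp add: split_transitive_def)
  then show "transitive_on V1 K"
    unfolding transitive_on_def
  proof (intro ballI)
    fix u v assume "u \<in> V1" "v \<in> V1"
    obtain x where x: "x \<in> V2" "u = q x" using \<open>u \<in> V1\<close> by (rule Q.V'_cases)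
    obtain y where y: "y \<in> V2" "v = q y" using \<open>v \<in> V1\<close> by (rule Q.V'_cases)
    assume "\<forall>x\<in>V2. \<forall>y\<in>V2. \<exists>h\<in>{h \<in> G2. Q.descend h \<in> K}. h x = y"
    then obtain h where "h \<in> G2" "Q.descend h \<in> K" "h x = y" using x(1) y(1) by blast
    moreover have "Q.descend h u = v"
      using Q.descend_q G2_subset_centralizer x y \<open>h \<in> G2\<close> \<open>h x = y\<close> by auto
    ultimately show "\<exists>k\<in>K. k u = v" by blast
  qed
qed


text \<open>
  The fibre of \<open>\<wp>\<^sub>1 \<circ> \<wp>\<^sub>2\<close> through \<open>s\<close> is \<open>{s, c\<^sub>2 s, a s, a (c\<^sub>2 s)}\<close>, and an \<open>a\<close>-invariant
  section through \<open>s\<close> misses \<open>c\<^sub>2 s\<close>, hence also \<open>a (c\<^sub>2 s)\<close>.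
\<close>

lemma section_quotient_unique:
  assumes S: "is_section V2 V1 p2 S" and a_S: "a ` S \<subseteq> S"
    and s: "s \<in> S" and s': "s' \<in> S" and same_proj: "p1 (p2 s) = p1 (p2 s')"
  shows "q s' = q s"
proof -
  have S_sub: "S \<subseteq> V2" and S_unique: "\<And>u. u \<in> V1 \<Longrightarrow> \<exists>!s. s \<in> S \<and> p2 s = u"
    using S by (simp_all add: is_section_iff)
  have s_V2: "s \<in> V2" and s'_V2: "s' \<in> V2" using s s' S_sub by auto
  have c2_s: "c2 s \<in> V2" using s_V2 Aut_in_V[OF deck_in_Aut[OF two_cover2]] by blast
  have "c2 s \<notin> S"
  proof
    assume "c2 s \<in> S"
    moreover have "p2 (c2 s) = p2 s" using deck_proj[OF two_cover2 s_V2] .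
    ultimately have "c2 s = s" using S_unique[OF p2_in_V1[OF s_V2]] s by blast
    then show False using deck_no_fixpoint[OF two_cover2 s_V2] by contradiction
  qed
  moreover have "a (a (c2 s)) \<in> S" if "s' = a (c2 s)" using a_S s' that by blast
  ultimately have "q s' \<noteq> q (c2 s)" using Q.q_eq_iff[OF c2_s s'_V2] s' by auto
  then show ?thesis using fibre_p1_p2[OF s_V2 s'_V2 same_proj] by simp
qed

lemma section_quotient:
  assumes S: "is_section V2 V1 p2 S" and a_S: "a ` S \<subseteq> S"
  shows "is_section V1 V0 p1' (q ` S)"
  unfolding is_section_iff
proof (intro conjI ballI)
  have S_sub: "S \<subseteq> V2" and S_unique: "\<And>u. u \<in> V1 \<Longrightarrow> \<exists>!s. s \<in> S \<and> p2 s = u"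
    using S by (simp_all add: is_section_iff)
  show "q ` S \<subseteq> V1" using S_sub Q.q_in_V' by blast
  fix w assume "w \<in> V0"
  then obtain x where x: "x \<in> V2" "p1 (p2 x) = w"
    using Q.covering by (auto simp: covering_def)
  obtain s where s: "s \<in> S" "p2 s = p2 x" using S_unique[OF p2_in_V1[OF x(1)]] by blast
  have s_V2: "s \<in> V2" using s(1) S_sub by blast
  show "\<exists>!u. u \<in> q ` S \<and> p1' u = w"
  proof (rule ex1I[of _ "q s"])
    show "q s \<in> q ` S \<and> p1' (q s) = w" using s x p1'_q[OF s_V2] by simp
    fix u assume "u \<in> q ` S \<and> p1' u = w"
    then obtain s' where s': "s' \<in> S" "u = q s'" "p1' u = w" by blast
    have "s' \<in> V2" using s'(1) S_sub by blast
    then have "p1 (p2 s) = p1 (p2 s')" using s' s x p1'_q[OF s_V2] p1'_q by simp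
    then show "u = q s" using section_quotient_unique[OF S a_S s(1) s'(1)] s'(2) by simp
  qed
qed

lemma split_sectional_quotient:
  assumes "split_sectional V2 E2 V1 p2 G1"
  shows "split_sectional V1 E1' V0 p1' G"
  unfolding split_sectional_def
proof (intro conjI allI impI)
  show "split V1 E1' p1' G" by (rule split_p1')
  fix K assume K: "complement V1 E1' p1' G K"
  let ?P = "{h \<in> G2. Q.descend h \<in> K}"
  have "sectional V2 V1 p2 ?P"
    using assms complement_preimage[OF K] by (simp add: split_sectional_def)
  then obtain S where S: "is_section V2 V1 p2 S" and S_inv: "\<And>h. h \<in> ?P \<Longrightarrow> h ` S = S"
    by (auto simp: sectional_def)
  have "id \<in> K" using K by (simp add: complement_def aut_group_def)
  then have "a \<in> ?P" using a_in_H H_subset_G2 Q.descend_a by auto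
  then have "a ` S \<subseteq> S" using S_inv by blast
  moreover have "k ` q ` S = q ` S" if k: "k \<in> K" for k
  proof -
    have "k \<in> G1'" using K k by (auto simp: complement_def)
    then obtain h where h: "h \<in> G2" "k = Q.descend h" using G1'_eq by blast
    then have "h ` S = S" using S_inv k by simp
    have "S \<subseteq> V2" using S by (simp add: is_section_iff)
    then have "k ` q ` S = q ` h ` S"
      using Q.descend_q G2_subset_centralizer h by (force simp: image_image)
    then show ?thesis using \<open>h ` S = S\<close> by simp
  qed
  ultimately show "sectional V1 V0 p1' K"
    unfolding sectional_def using section_quotient[OF S] by blast
qed

end

theorem lemma5p2:
  fixes V0 :: "'a set" and E0 :: "'a \<Rightarrow> 'a \<Rightarrow> bool"
    and V1 :: "'b set" and E1 :: "'b \<Rightarrow> 'b \<Rightarrow> bool" and p1 :: "'b \<Rightarrow> 'a"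
    and V2 :: "'c set" and E2 :: "'c \<Rightarrow> 'c \<Rightarrow> bool" and p2 :: "'c \<Rightarrow> 'b"
    and G :: "('a \<Rightarrow> 'a) set" and G1 :: "('b \<Rightarrow> 'b) set" and G2 :: "('c \<Rightarrow> 'c) set"
  assumes "graph V0 E0"
    and "arc_transitive V0 E0 G"
    and "admissible2 V2 E2 p2 V1 E1 p1 V0 E0 G G1 G2"
  shows "(split_transitive V2 E2 p2 G1 \<longrightarrow>
           (\<exists>(V1' :: 'b set) E1' p2' p1' G1' G2'.
              admissible2 V2 E2 p2' V1' E1' p1' V0 E0 G G1' G2' \<and>
              split_transitive V1' E1' p1' G)) \<and>
         (split_sectional V2 E2 V1 p2 G1 \<longrightarrow>
           (\<exists>(V1' :: 'b set) E1' p2' p1' G1' G2'.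
              admissible2 V2 E2 p2' V1' E1' p1' V0 E0 G G1' G2' \<and>
              split_sectional V1' E1' V0 p1' G))"
proof (intro conjI impI)
  assume split: "split_transitive V2 E2 p2 G1"
  then obtain H where "complement V2 E2 p2 G1 H" by (auto simp: split_transitive_def split_def)
  then interpret split_chain V0 E0 V1 E1 p1 V2 E2 p2 G G1 G2 H
    using assms(3) by unfold_locales
  show "\<exists>(V1' :: 'b set) E1' p2' p1' G1' G2'.
          admissible2 V2 E2 p2' V1' E1' p1' V0 E0 G G1' G2' \<and> split_transitive V1' E1' p1' G"
    using admissible_quotient split_transitive_quotient[OF split] by blast
next
  assume split: "split_sectional V2 E2 V1 p2 G1"
  then obtain H where "complement V2 E2 p2 G1 H" by (auto simp: split_sectional_def split_def)
  then interpret split_chain V0 E0 V1 E1 p1 V2 E2 p2 G G1 G2 H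
    using assms(3) by unfold_locales
  show "\<exists>(V1' :: 'b set) E1' p2' p1' G1' G2'.
          admissible2 V2 E2 p2' V1' E1' p1' V0 E0 G G1' G2' \<and> split_sectional V1' E1' V0 p1' G"
    using admissible_quotient split_sectional_quotient[OF split] by blast
qed

end
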